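(* Let $f:X\to\mathcal G$ be convex and $x_0\in\operatorname{dom} f$. If $x_0$ solves the set-valued Minty inequality, i.e. for all $x\in X$ with $f(x)\ne f(x_0)$ one has $f'(x,x_0-x)\not\subseteq 0^+f(x)$, then it solves the scalarized Minty inequality, i.e. for all $x\in X$ with $f(x)\neq f(x_0)$ there exists $z^*\in C^-\setminus\{0\}$ with $\varphi_{f,z^*}(x)\ne-\infty$ and $\varphi'_{f,z^*}(x,x_0-x)<0$. If additionally the strong regularity condition $\varphi_{f'(x,\cdot),z^*}(u)=\varphi'_{f,z^*}(x,u)$ holds for all $z^*\in C^-\setminus\{0\}$ and all $x,u\in X$, then $x_0$ solves the set-valued Minty inequality if and only if it solves the scalarized one.
   Context: $X$ real linear space, $Z$ real locally convex Hausdorff space with dual $Z^*$, $C\subseteq Z$ closed convex cone, $0\in C$, $C^-=\{z^*:z^*(c)\le0\ \forall c\in C\}$, $C^-\setminus\{0\}\ne\emptyset$. $\mathcal G=\{A\subseteq Z:A=\operatorname{cl}\operatorname{co}(A+C)\}$; $A\oplus B=\operatorname{cl}\{a+b\}$, $tA=\{ta\}$ ($t>0$), $A\ominus B=\{z:B+\{z\}\subseteq A\}$; $0^+A=\{z:A+\{z\}\subseteq A\}$ for $A\ne\emptyset$, $0^+\emptyset=\emptyset$. $f$ convex: $f(tx_1+(1-t)x_2)\supseteq tf(x_1)\oplus(1-t)f(x_2)$; $\operatorname{dom}f=\{x:f(x)\ne\emptyset\}$. $f'(x,u)=\bigcap_{t_0>0}\operatorname{cl}\operatorname{co}\bigcup_{0<t<t_0}\frac1t(f(x+tu)\ominus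 f(x))$. On $\overline{\mathbb R}$: inf-addition $\dot+$ ($(-\infty)\dot+(+\infty)=+\infty$), $r\ominus s=\inf\{t\in\mathbb R:r\le s\dot+t\}$ ($\inf\emptyset=+\infty$). $\varphi_{f,z^*}(x)=\inf\{-z^*(z):z\in f(x)\}$ ($+\infty$ if $f(x)=\emptyset$), $\varphi_{f'(x,\cdot),z^*}(u)=\inf\{-z^*(z):z\in f'(x,u)\}$, $\varphi'_{f,z^*}(x,u)=\inf_{t>0}\frac1t(\varphi_{f,z^*}(x+tu)\ominus\varphi_{f,z^*}(x))$. *)

theory Defs
  imports "HOL-Analysis.Analysis" "HOL-Library.Extended_Real"
begin

text \<open>Z is a real locally convex Hausdorff topological vector space.
  Hausdorffness comes from the type class t2_space; the remaining axioms are stated here.\<close>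
definition lc_tvs :: "'z::{real_vector,t2_space} itself \<Rightarrow> bool" where
  "lc_tvs _ \<longleftrightarrow>
     continuous_on UNIV (\<lambda>p::'z \<times> 'z. fst p + snd p) \<and>
     continuous_on UNIV (\<lambda>p::real \<times> 'z. fst p *\<^sub>R snd p) \<and>
     (\<forall>U::'z set. open U \<and> 0 \<in> U \<longrightarrow> (\<exists>V. open V \<and> convex V \<and> 0 \<in> V \<and> V \<subseteq> U))"

definition topdual :: "('z::{real_vector,topological_space} \<Rightarrow> real) set" where
  "topdual = {zs. linear zs \<and> continuous_on UNIV zs}"

definition negdual :: "'z::{real_vector,topological_space} set \<Rightarrow> ('z \<Rightarrow> real) set" where
  "negdual C = {zs \<in> topdual. \<forall>c\<in>C. zs c \<le> 0}"

definition msum :: "'z::real_vector set \<Rightarrow> 'z set \<Rightarrow> 'z set" where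
  "msum A B = {a + b | a b. a \<in> A \<and> b \<in> B}"

definition GG :: "'z::{real_vector,topological_space} set \<Rightarrow> 'z set set" where
  "GG C = {A. A = closure (convex hull (msum A C))}"

definition oplus :: "'z::{real_vector,topological_space} set \<Rightarrow> 'z set \<Rightarrow> 'z set" where
  "oplus A B = closure (msum A B)"

definition sscale :: "real \<Rightarrow> 'z::real_vector set \<Rightarrow> 'z set" where
  "sscale t A = (\<lambda>a. t *\<^sub>R a) ` A"

definition ominus :: "'z::real_vector set \<Rightarrow> 'z set \<Rightarrow> 'z set" where
  "ominus A B = {z. msum B {z} \<subseteq> A}"

definition recc :: "'z::real_vector set \<Rightarrow> 'z set" where
  "recc A = (if A = {} then {} else {z. msum A {z} \<subseteq> A})"

definition setconvex :: "'z::{real_vector,topological_space} set \<Rightarrow> ('x::real_vector \<Rightarrow> 'z set) \<Rightarrow> bool" where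
  "setconvex C f \<longleftrightarrow> (\<forall>x. f x \<in> GG C) \<and>
     (\<forall>x1 x2 t. 0 < t \<and> t < 1 \<longrightarrow>
        oplus (sscale t (f x1)) (sscale (1 - t) (f x2)) \<subseteq> f (t *\<^sub>R x1 + (1 - t) *\<^sub>R x2))"

definition sdom :: "('x \<Rightarrow> 'z set) \<Rightarrow> 'x set" where
  "sdom f = {x. f x \<noteq> {}}"

definition sdir :: "('x::real_vector \<Rightarrow> 'z::{real_vector,topological_space} set) \<Rightarrow> 'x \<Rightarrow> 'x \<Rightarrow> 'z set" where
  "sdir f x u = (\<Inter>t0\<in>{t0::real. 0 < t0}.
      closure (convex hull (\<Union>t\<in>{t. 0 < t \<and> t < t0}.
          sscale (1 / t) (ominus (f (x + t *\<^sub>R u)) (f x)))))"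

definition infadd :: "ereal \<Rightarrow> ereal \<Rightarrow> ereal" where
  "infadd r s = (if r = \<infinity> \<or> s = \<infinity> then \<infinity>
                 else if r = -\<infinity> \<or> s = -\<infinity> then -\<infinity>
                 else ereal (real_of_ereal r + real_of_ereal s))"

definition eminus :: "ereal \<Rightarrow> ereal \<Rightarrow> ereal" where
  "eminus r s = Inf (ereal ` {t::real. r \<le> infadd s (ereal t)})"

definition phi :: "('z \<Rightarrow> real) \<Rightarrow> 'z set \<Rightarrow> ereal" where
  "phi zs A = Inf ((\<lambda>z. ereal (- zs z)) ` A)"

definition phidir :: "('x::real_vector \<Rightarrow> 'z set) \<Rightarrow> ('z \<Rightarrow> real) \<Rightarrow> 'x \<Rightarrow> 'x \<Rightarrow> ereal" where
  "phidir f zs x u = (INF t\<in>{t::real. 0 < t}.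
      ereal (1 / t) * eminus (phi zs (f (x + t *\<^sub>R u))) (phi zs (f x)))"

end

theory Submission
  imports Defs
begin

text \<open>Suppose f'(x, x0 - x) contains a z that is not a recession direction of f(x), say a \<in> f(x)
  but a + z \<notin> f(x). Separating a + z from the closed convex set f(x) (Hahn-Banach, via the
  Minkowski gauge of a convex neighbourhood of 0) gives a continuous functional z* with z*(z) > 0;
  it is nonpositive on C because f(x) + C \<subseteq> f(x), and \<phi>_{f,z*}(x) is finite. As
  \<phi>'_{f,z*}(x, u) \<le> \<phi>_{f'(x,\<cdot>),z*}(u) \<le> -z*(z) < 0, the scalarized inequality holds.
  Conversely, under strong regularity a negative value of \<phi>_{f'(x,\<cdot>),z*}(x0 - x) provides
  w \<in> f'(x, x0 - x) with z*(w) > 0, and w cannot be a recession direction of f(x): along a + n w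
  the infimum \<phi>_{f,z*}(x) would be -\<infinity>.\<close>

section \<open>Sublinear functionals and their linear minorants\<close>

definition sublinear :: "('a::real_vector \<Rightarrow> real) \<Rightarrow> bool" where
  "sublinear q \<longleftrightarrow> (\<forall>x y. q (x + y) \<le> q x + q y) \<and> (\<forall>c x. 0 \<le> c \<longrightarrow> q (c *\<^sub>R x) = c * q x)"

lemma sublinear_add: "sublinear q \<Longrightarrow> q (x + y) \<le> q x + q y"
  unfolding sublinear_def by blast

lemma sublinear_scaleR: "sublinear q \<Longrightarrow> 0 \<le> c \<Longrightarrow> q (c *\<^sub>R x) = c * q x"
  unfolding sublinear_def by blast

lemma sublinear_zero: "sublinear q \<Longrightarrow> q 0 = 0"
  using sublinear_scaleR[of q 0 0] by simp

lemma sublinear_neg_le: "sublinear q \<Longrightarrow> - q (- x) \<le> q x"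
  using sublinear_add[of q x "- x"] sublinear_zero[of q] by simp

lemma sublinear_minorant_lower_bound: "sublinear r \<Longrightarrow> r \<le> q \<Longrightarrow> - q (- x) \<le> r x"
  using sublinear_neg_le[of r x] le_funD[of r q "- x"] by linarith

lemma sublinearI:
  assumes add: "\<And>x y. q (x + y) \<le> q x + q y" and zero: "q 0 = 0"
    and scale: "\<And>c x. 0 < c \<Longrightarrow> q (c *\<^sub>R x) \<le> c * q x"
  shows "sublinear q"
  unfolding sublinear_def
proof (intro conjI allI impI add)
  fix c :: real and x assume "0 \<le> c"
  show "q (c *\<^sub>R x) = c * q x"
  proof (cases "c = 0")
    case False
    with \<open>0 \<le> c\<close> have c: "0 < c" by simp
    have "q x = q ((1 / c) *\<^sub>R (c *\<^sub>R x))" using c by simp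
    also have "\<dots> \<le> q (c *\<^sub>R x) / c" using scale[of "1 / c" "c *\<^sub>R x"] c by simp
    finally have "c * q x \<le> q (c *\<^sub>R x)" using c by (simp add: field_simps)
    with scale[OF c, of x] show ?thesis by linarith
  qed (simp add: zero)
qed

text \<open>A minimal sublinear minorant is invariant under this construction, which forces it to be
  odd and hence linear.\<close>
definition shift_minorant :: "('a::real_vector \<Rightarrow> real) \<Rightarrow> 'a \<Rightarrow> 'a \<Rightarrow> real" where
  "shift_minorant q a x = Inf ((\<lambda>t. q (x + t *\<^sub>R a) - t * q a) ` {0..})"

context
  fixes q :: "'a::real_vector \<Rightarrow> real"
  assumes q: "sublinear q"
begin

lemma shift_minorant_lower_bound: "0 \<le> t \<Longrightarrow> - q (- x) \<le> q (x + t *\<^sub>R a) - t * q a"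
  using sublinear_add[OF q, of "x + t *\<^sub>R a" "- x"] sublinear_scaleR[OF q, of t a] by simp

lemma shift_minorant_le: "0 \<le> t \<Longrightarrow> shift_minorant q a x \<le> q (x + t *\<^sub>R a) - t * q a"
  unfolding shift_minorant_def
  by (rule cInf_lower) (auto intro!: bdd_belowI2 shift_minorant_lower_bound)

lemma shift_minorant_greatest:
  "(\<And>t. 0 \<le> t \<Longrightarrow> B \<le> q (x + t *\<^sub>R a) - t * q a) \<Longrightarrow> B \<le> shift_minorant q a x"
  unfolding shift_minorant_def by (rule cInf_greatest) auto

lemma shift_minorant_le_self: "shift_minorant q a x \<le> q x"
  using shift_minorant_le[of 0 a x] by simp

lemma shift_minorant_neg: "shift_minorant q a (- a) \<le> - q a"
  using shift_minorant_le[of 1 a "- a"] sublinear_zero[OF q] by simp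

lemma sublinear_shift_minorant: "sublinear (shift_minorant q a)"
proof (rule sublinearI)
  fix x y
  have "shift_minorant q a (x + y) - (q (y + t *\<^sub>R a) - t * q a) \<le> shift_minorant q a x"
    if t: "0 \<le> t" for t
  proof (rule shift_minorant_greatest)
    fix s :: real assume s: "0 \<le> s"
    have "shift_minorant q a (x + y) \<le> q ((x + s *\<^sub>R a) + (y + t *\<^sub>R a)) - (s + t) * q a"
      using shift_minorant_le[of "s + t" a "x + y"] s t by (simp add: algebra_simps)
    also have "\<dots> \<le> q (x + s *\<^sub>R a) + q (y + t *\<^sub>R a) - (s + t) * q a"
      using sublinear_add[OF q] by simp
    finally show "shift_minorant q a (x + y) - (q (y + t *\<^sub>R a) - t * q a)
        \<le> q (x + s *\<^sub>R a) - s * q a"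
      by (simp add: algebra_simps)
  qed
  then have "shift_minorant q a (x + y) - shift_minorant q a x \<le> shift_minorant q a y"
    by (intro shift_minorant_greatest) (smt (verit))
  then show "shift_minorant q a (x + y) \<le> shift_minorant q a x + shift_minorant q a y"
    by simp
next
  have "- q (- 0) \<le> shift_minorant q a 0"
    by (rule shift_minorant_greatest) (rule shift_minorant_lower_bound)
  with shift_minorant_le_self[of a 0] sublinear_zero[OF q] show "shift_minorant q a 0 = 0"
    by simp
next
  fix c :: real and x assume c: "0 < c"
  have "shift_minorant q a (c *\<^sub>R x) / c \<le> shift_minorant q a x"
  proof (rule shift_minorant_greatest)
    fix t :: real assume t: "0 \<le> t"
    have "shift_minorant q a (c *\<^sub>R x) \<le> q (c *\<^sub>R x + (c * t) *\<^sub>R a) - (c * t) * q a"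
      using shift_minorant_le[of "c * t" a "c *\<^sub>R x"] t c by simp
    also have "\<dots> = c * (q (x + t *\<^sub>R a) - t * q a)"
      using sublinear_scaleR[OF q, of c "x + t *\<^sub>R a"] c by (simp add: algebra_simps)
    finally show "shift_minorant q a (c *\<^sub>R x) / c \<le> q (x + t *\<^sub>R a) - t * q a"
      using c by (simp add: field_simps)
  qed
  then show "shift_minorant q a (c *\<^sub>R x) \<le> c * shift_minorant q a x"
    using c by (simp add: field_simps)
qed

end

lemma sublinear_Inf_chain:
  fixes R :: "('a::real_vector \<Rightarrow> real) set"
  assumes "R \<noteq> {}" and sub: "\<And>r. r \<in> R \<Longrightarrow> sublinear r \<and> r \<le> q"
    and chain: "\<And>r s. r \<in> R \<Longrightarrow> s \<in> R \<Longrightarrow> r \<le> s \<or> s \<le> r"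
  shows "sublinear (\<lambda>x. INF r\<in>R. r x)"
proof -
  have bdd: "bdd_below ((\<lambda>r. r x) ` R)" for x
  proof (rule bdd_belowI2[where m = "- q (- x)"])
    fix r assume "r \<in> R"
    then show "- q (- x) \<le> r x"
      using sub[of r] sublinear_minorant_lower_bound by blast
  qed
  have Inf_less: "(INF r\<in>R. r x) < b \<longleftrightarrow> (\<exists>r\<in>R. r x < b)" for x b
    using cInf_less_iff[OF _ bdd[of x]] \<open>R \<noteq> {}\<close> by simp
  have Inf_le: "(INF r\<in>R. r x) \<le> r x" if "r \<in> R" for r x
    using that bdd by (rule cINF_lower[rotated])
  show ?thesis
  proof (rule sublinearI)
    fix x y
    show "(INF r\<in>R. r (x + y)) \<le> (INF r\<in>R. r x) + (INF r\<in>R. r y)"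
    proof (rule field_le_epsilon)
      fix e :: real assume "0 < e"
      then obtain r s where r: "r \<in> R" "r x < (INF r\<in>R. r x) + e / 2"
        and s: "s \<in> R" "s y < (INF r\<in>R. r y) + e / 2"
        using Inf_less[of x] Inf_less[of y] by (meson less_add_same_cancel1 half_gt_zero)
      obtain m where m: "m \<in> R" "m \<le> r" "m \<le> s" using chain[OF r(1) s(1)] r(1) s(1) by blast
      have "(INF r\<in>R. r (x + y)) \<le> m x + m y"
        using Inf_le[OF m(1)] sublinear_add[of m] sub[OF m(1)] by (blast intro: order_trans)
      also have "\<dots> \<le> r x + s y" using m by (simp add: add_mono le_funD)
      finally show "(INF r\<in>R. r (x + y)) \<le> (INF r\<in>R. r x) + (INF r\<in>R. r y) + e"
        using r s by simp
    qed
  next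
    have "(INF r\<in>R. r 0) = (INF r\<in>R. 0)"
      using sub sublinear_zero by (intro INF_cong) auto
    with \<open>R \<noteq> {}\<close> show "(INF r\<in>R. r 0) = 0" by simp
  next
    fix c :: real and x assume c: "0 < c"
    have scale: "r (c *\<^sub>R x) = c * r x" if "r \<in> R" for r
      using sub[OF that] sublinear_scaleR[of r c x] c by simp
    have "(INF r\<in>R. r (c *\<^sub>R x)) < b \<longleftrightarrow> c * (INF r\<in>R. r x) < b" for b
    proof -
      have "(INF r\<in>R. r (c *\<^sub>R x)) < b \<longleftrightarrow> (\<exists>r\<in>R. r x < b / c)"
        using Inf_less[of "c *\<^sub>R x" b] scale c by (simp add: pos_less_divide_eq mult.commute)
      also have "\<dots> \<longleftrightarrow> (INF r\<in>R. r x) < b / c"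
        using Inf_less[of x] by simp
      also have "\<dots> \<longleftrightarrow> c * (INF r\<in>R. r x) < b"
        using c by (simp add: pos_less_divide_eq mult.commute)
      finally show ?thesis .
    qed
    then show "(INF r\<in>R. r (c *\<^sub>R x)) \<le> c * (INF r\<in>R. r x)"
      by (meson linorder_not_le order_less_irrefl)
  qed
qed

lemma minimal_sublinear_linear:
  assumes m: "sublinear m" and minimal: "\<And>r. sublinear r \<Longrightarrow> r \<le> m \<Longrightarrow> r = m"
  shows "linear m"
proof -
  have neg: "m (- a) = - m a" for a
  proof -
    have "shift_minorant m a = m"
      using minimal sublinear_shift_minorant[OF m] shift_minorant_le_self[OF m]
      by (simp add: le_fun_def)
    then have "m (- a) \<le> - m a" using shift_minorant_neg[OF m, of a] by simp
    with sublinear_neg_le[OF m, of "- a"] show ?thesis by simp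
  qed
  show ?thesis
  proof (rule linearI)
    fix x y
    show "m (x + y) = m x + m y"
      using sublinear_add[OF m, of x y] sublinear_add[OF m, of "- x" "- y"] neg[of "x + y"]
        neg[of x] neg[of y] by simp
  next
    fix c :: real and x
    show "m (c *\<^sub>R x) = c *\<^sub>R m x"
    proof (cases "0 \<le> c")
      case False
      then have "m (c *\<^sub>R x) = - m ((- c) *\<^sub>R x)" using neg[of "(- c) *\<^sub>R x"] by simp
      with sublinear_scaleR[OF m, of "- c" x] False show ?thesis by simp
    qed (simp add: sublinear_scaleR[OF m])
  qed
qed

lemma sublinear_linear_minorant:
  assumes q: "sublinear q"
  shows "\<exists>L. linear L \<and> L \<le> q"
proof -
  define P where "P = {r. sublinear r \<and> r \<le> q}"
  have "\<exists>m\<in>P. \<forall>r\<in>P. r \<le> m \<longrightarrow> r = m"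
  proof (rule predicate_Zorn[where P = "\<lambda>r s. s \<le> r"])
    show "partial_order_on P (relation_of (\<lambda>r s. s \<le> r) P)"
      by (rule partial_order_on_relation_ofI) auto
  next
    fix R assume R: "R \<in> Chains (relation_of (\<lambda>r s. s \<le> r) P)"
    show "\<exists>u\<in>P. \<forall>r\<in>R. u \<le> r"
    proof (cases "R = {}")
      case True
      then show ?thesis using q unfolding P_def by blast
    next
      case False
      have RP: "R \<subseteq> P" using Chains_relation_of[OF R] .
      have chain: "r \<le> s \<or> s \<le> r" if "r \<in> R" "s \<in> R" for r s
        using R that unfolding Chains_def relation_of_def by blast
      have sub: "sublinear r \<and> r \<le> q" if "r \<in> R" for r using that RP unfolding P_def by blast
      have bdd: "bdd_below ((\<lambda>r. r x) ` R)" for x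
        using sub sublinear_minorant_lower_bound by (intro bdd_belowI2[where m = "- q (- x)"]) blast
      have "(\<lambda>x. INF r\<in>R. r x) \<in> P"
        using sublinear_Inf_chain[OF False sub chain] sub False
        unfolding P_def by (auto simp: le_fun_def intro: cINF_lower2[OF bdd])
      moreover have "(\<lambda>x. INF r\<in>R. r x) \<le> r" if "r \<in> R" for r
        using that bdd by (auto simp: le_fun_def intro: cINF_lower)
      ultimately show ?thesis by blast
    qed
  qed
  then obtain m where m: "sublinear m" "m \<le> q" and minimal: "\<And>r. r \<in> P \<Longrightarrow> r \<le> m \<Longrightarrow> r = m"
    unfolding P_def by blast
  have "linear m"
    using m minimal unfolding P_def by (intro minimal_sublinear_linear) (auto intro: order_trans)
  with m show ?thesis by blast
qed

lemma sublinear_linear_minorant_at: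
  assumes q: "sublinear q"
  shows "\<exists>L. linear L \<and> L \<le> q \<and> L y = q y"
proof -
  obtain L where L: "linear L" "L \<le> shift_minorant q y"
    using sublinear_linear_minorant[OF sublinear_shift_minorant[OF q]] by blast
  have "L \<le> q" using L(2) shift_minorant_le_self[OF q] by (auto simp: le_fun_def intro: order_trans)
  moreover have "- L y \<le> - q y"
    using le_funD[OF L(2), of "- y"] shift_minorant_neg[OF q, of y] linear_neg[OF L(1), of y] by simp
  ultimately show ?thesis using L(1) by (auto simp: le_fun_def intro: order_antisym)
qed

section \<open>Locally convex spaces\<close>

lemma lc_tvs_continuous_on_add:
  "lc_tvs TYPE('z::{real_vector,t2_space}) \<Longrightarrow> continuous_on UNIV (\<lambda>p::'z \<times> 'z. fst p + snd p)"
  unfolding lc_tvs_def by blast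

lemma lc_tvs_continuous_on_scaleR:
  "lc_tvs TYPE('z::{real_vector,t2_space}) \<Longrightarrow> continuous_on UNIV (\<lambda>p::real \<times> 'z. fst p *\<^sub>R snd p)"
  unfolding lc_tvs_def by blast

lemma continuous_on_UNIV_compose:
  "continuous_on UNIV g \<Longrightarrow> continuous_on UNIV f \<Longrightarrow> continuous_on UNIV (\<lambda>x. g (f x))"
  by (rule continuous_on_compose2[of UNIV g UNIV f]) auto

lemma lc_tvs_continuous_on_scaleR_left:
  assumes "lc_tvs TYPE('z::{real_vector,t2_space})"
  shows "continuous_on UNIV (\<lambda>t. t *\<^sub>R (y::'z))"
  using continuous_on_UNIV_compose[OF lc_tvs_continuous_on_scaleR[OF assms],
      of "\<lambda>t. (t, y)"] by (simp add: continuous_on_Pair)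

lemma lc_tvs_continuous_on_affine:
  assumes Z: "lc_tvs TYPE('z::{real_vector,t2_space})"
  shows "continuous_on UNIV (\<lambda>x::'z. c *\<^sub>R x + b)"
proof -
  have "continuous_on UNIV (\<lambda>x::'z. c *\<^sub>R x)"
    using continuous_on_UNIV_compose[OF lc_tvs_continuous_on_scaleR[OF Z], of "\<lambda>x. (c, x)"]
    by (simp add: continuous_on_Pair)
  then show ?thesis
    using continuous_on_UNIV_compose[OF lc_tvs_continuous_on_add[OF Z], of "\<lambda>x. (c *\<^sub>R x, b)"]
    by (simp add: continuous_on_Pair)
qed

lemma open_vimage_continuous_on_UNIV: "continuous_on UNIV f \<Longrightarrow> open S \<Longrightarrow> open (f -` S)"
  using continuous_on_open_vimage[OF open_UNIV] by auto

lemma lc_tvs_convex_closure: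
  fixes K :: "'z::{real_vector,t2_space} set"
  assumes Z: "lc_tvs TYPE('z)" and K: "convex K"
  shows "convex (closure K)"
  unfolding convex_def
proof (intro ballI allI impI)
  fix x y and u v :: real
  assume xy: "x \<in> closure K" "y \<in> closure K" and uv: "0 \<le> u" "0 \<le> v" "u + v = 1"
  define g where "g p = u *\<^sub>R fst p + v *\<^sub>R snd p" for p :: "'z \<times> 'z"
  have "continuous_on UNIV (\<lambda>p::'z \<times> 'z. (u *\<^sub>R fst p + 0, v *\<^sub>R snd p + 0))"
    by (intro continuous_on_Pair continuous_on_UNIV_compose[OF lc_tvs_continuous_on_affine[OF Z]]
        continuous_on_fst continuous_on_snd continuous_on_id)
  then have "continuous_on UNIV g"
    using continuous_on_UNIV_compose[OF lc_tvs_continuous_on_add[OF Z]] unfolding g_def by force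
  moreover have "g ` (K \<times> K) \<subseteq> closure K"
    using convexD[OF K] uv closure_subset unfolding g_def by fastforce
  ultimately have "g ` closure (K \<times> K) \<subseteq> closure K"
    by (intro image_closure_subset) (auto intro: continuous_on_subset)
  moreover have "(x, y) \<in> closure (K \<times> K)" using xy by (simp add: closure_Times)
  ultimately show "u *\<^sub>R x + v *\<^sub>R y \<in> closure K" unfolding g_def by force
qed

lemma lc_tvs_continuous_on_linear:
  fixes L :: "'z::{real_vector,t2_space} \<Rightarrow> real"
  assumes Z: "lc_tvs TYPE('z)" and L: "linear L" and W: "open W" "0 \<in> W"
    and bound: "\<And>w. w \<in> W \<Longrightarrow> L w \<le> 1"
  shows "continuous_on UNIV L"
proof -
  have "open (L -` S)" if "open S" for S
    unfolding open_subopen[of "L -` S"]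
  proof
    fix x assume "x \<in> L -` S"
    then obtain e where e: "0 < e" "ball (L x) e \<subseteq> S" using \<open>open S\<close> open_contains_ball by blast
    define N where "N = W \<inter> uminus -` W"
    \<comment> \<open>on the symmetric neighbourhood x + (e/2) N the values of L stay within e/2 of L x\<close>
    define T where "T = (\<lambda>y. (2 / e) *\<^sub>R y + (- (2 / e) *\<^sub>R x)) -` N"
    have "open N"
      using W(1) open_vimage_continuous_on_UNIV[OF lc_tvs_continuous_on_affine[OF Z, of "-1" 0]]
      unfolding N_def by auto
    then have "open T" unfolding T_def
      by (rule open_vimage_continuous_on_UNIV[OF lc_tvs_continuous_on_affine[OF Z], rotated])
    moreover have "x \<in> T" using W(2) unfolding T_def N_def by simp
    moreover have "T \<subseteq> L -` S"
    proof
      fix y assume "y \<in> T"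
      define v where "v = (2 / e) *\<^sub>R (y - x)"
      have "v \<in> W" "- v \<in> W" using \<open>y \<in> T\<close> unfolding T_def N_def v_def
        by (auto simp: algebra_simps)
      then have "\<bar>L v\<bar> \<le> 1"
        using bound[of v] bound[of "- v"] linear_neg[OF L, of v] by (simp add: abs_le_iff)
      have "y = x + (e / 2) *\<^sub>R v" unfolding v_def using e by simp
      then have "\<bar>L x - L y\<bar> = (e / 2) * \<bar>L v\<bar>"
        using linear_add[OF L] linear_scale[OF L] e by (simp add: abs_mult abs_minus_commute)
      also have "\<dots> \<le> e / 2" using \<open>\<bar>L v\<bar> \<le> 1\<close> e by (intro mult_left_le) simp_all
      also have "\<dots> < e" using e by simp
      finally show "y \<in> L -` S" using e by (auto simp: dist_real_def)
    qed
    ultimately show "\<exists>T. open T \<and> x \<in> T \<and> T \<subseteq> L -` S" by blast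
  qed
  then show ?thesis by (simp add: continuous_on_open_vimage[OF open_UNIV])
qed

section \<open>Minkowski gauge and separation\<close>

definition minkowski :: "'z::real_vector set \<Rightarrow> 'z \<Rightarrow> real" where
  "minkowski W x = Inf {t. 0 < t \<and> (1 / t) *\<^sub>R x \<in> W}"

locale lc_convex_open_nhd =
  fixes W :: "'z::{real_vector,t2_space} set"
  assumes Z: "lc_tvs TYPE('z)" and open_W: "open W" and convex_W: "convex W" and zero_W: "0 \<in> W"
begin

lemma absorbing: "t0 *\<^sub>R y \<in> W \<Longrightarrow> \<exists>e>0. \<forall>t. \<bar>t - t0\<bar> < e \<longrightarrow> t *\<^sub>R y \<in> W"
  using open_vimage_continuous_on_UNIV[OF lc_tvs_continuous_on_scaleR_left[OF Z] open_W, of y]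
  unfolding open_real by (force simp: dist_real_def)

lemma gauge_set_nonempty: "{t. 0 < t \<and> (1 / t) *\<^sub>R x \<in> W} \<noteq> {}"
proof -
  obtain e where "0 < e" "(e / 2) *\<^sub>R x \<in> W" using absorbing[of 0 x] zero_W by force
  then have "2 / e \<in> {t. 0 < t \<and> (1 / t) *\<^sub>R x \<in> W}" by simp
  then show ?thesis by blast
qed

lemma bdd_below_gauge_set: "bdd_below {t. 0 < t \<and> (1 / t) *\<^sub>R x \<in> W}"
  by (rule bdd_belowI[where m = 0]) simp

lemma minkowski_le: "0 < t \<Longrightarrow> (1 / t) *\<^sub>R x \<in> W \<Longrightarrow> minkowski W x \<le> t"
  unfolding minkowski_def by (rule cInf_lower) (auto intro: bdd_below_gauge_set)

lemma minkowski_greatest: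
  "(\<And>t. 0 < t \<Longrightarrow> (1 / t) *\<^sub>R x \<in> W \<Longrightarrow> b \<le> t) \<Longrightarrow> b \<le> minkowski W x"
  unfolding minkowski_def by (rule cInf_greatest[OF gauge_set_nonempty]) blast

lemma minkowski_nonneg: "0 \<le> minkowski W x"
  by (rule minkowski_greatest) simp

lemma minkowski_less_imp:
  assumes "minkowski W x < r"
  shows "0 < r" "(1 / r) *\<^sub>R x \<in> W"
proof -
  obtain t where t: "0 < t" "(1 / t) *\<^sub>R x \<in> W" "t < r"
    using assms cInf_less_iff[OF gauge_set_nonempty bdd_below_gauge_set, of x r]
    unfolding minkowski_def by auto
  then show "0 < r" by simp
  \<comment> \<open>(1/r) x lies on the segment between 0 and (1/t) x\<close>
  have "(t / r) *\<^sub>R ((1 / t) *\<^sub>R x) + (1 - t / r) *\<^sub>R 0 \<in> W"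
    using convexD[OF convex_W t(2) zero_W, of "t / r" "1 - t / r"] t by simp
  then show "(1 / r) *\<^sub>R x \<in> W" using t by simp
qed

lemma minkowski_ge_1: "y \<notin> W \<Longrightarrow> 1 \<le> minkowski W y"
  using minkowski_less_imp[of y 1] by force

lemma minkowski_less_1:
  assumes "w \<in> W"
  shows "minkowski W w < 1"
proof -
  obtain e where "0 < e" "(1 + e / 2) *\<^sub>R w \<in> W" using absorbing[of 1 w] assms by force
  then have "minkowski W w \<le> 1 / (1 + e / 2)" by (intro minkowski_le) simp_all
  also have "\<dots> < 1" using \<open>0 < e\<close> by (simp add: field_simps)
  finally show ?thesis .
qed

lemma sublinear_minkowski: "sublinear (minkowski W)"
proof (rule sublinearI)
  fix x y
  show "minkowski W (x + y) \<le> minkowski W x + minkowski W y"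
  proof (rule field_le_epsilon)
    fix e :: real assume "0 < e"
    define s t where "s = minkowski W x + e / 2" and "t = minkowski W y + e / 2"
    have s: "0 < s" "(1 / s) *\<^sub>R x \<in> W" and t: "0 < t" "(1 / t) *\<^sub>R y \<in> W"
      using minkowski_less_imp[of x s] minkowski_less_imp[of y t] \<open>0 < e\<close>
      unfolding s_def t_def by simp_all
    have "(1 / (s + t)) *\<^sub>R (x + y) \<in> W"
      using convexD[OF convex_W s(2) t(2), of "s / (s + t)" "t / (s + t)"] s t
      by (simp add: add_divide_distrib[symmetric] scaleR_add_right)
    then have "minkowski W (x + y) \<le> s + t" using s t by (intro minkowski_le) simp_all
    then show "minkowski W (x + y) \<le> minkowski W x + minkowski W y + e"
      unfolding s_def t_def by simp
  qed
next
  have "minkowski W 0 \<le> t" if "0 < t" for t using minkowski_le[OF that] zero_W by simp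
  then show "minkowski W 0 = 0"
    using minkowski_nonneg[of 0] by (metis field_le_epsilon add_0 order_antisym)
next
  fix c :: real and x assume c: "0 < c"
  have "minkowski W (c *\<^sub>R x) / c \<le> minkowski W x"
  proof (rule minkowski_greatest)
    fix t assume "0 < t" "(1 / t) *\<^sub>R x \<in> W"
    then have "minkowski W (c *\<^sub>R x) \<le> c * t" using c by (intro minkowski_le) simp_all
    then show "minkowski W (c *\<^sub>R x) / c \<le> t" using c by (simp add: field_simps)
  qed
  then show "minkowski W (c *\<^sub>R x) \<le> c * minkowski W x" using c by (simp add: field_simps)
qed

end

lemma lc_tvs_open_sums:
  fixes V :: "'z::{real_vector,t2_space} set"
  assumes Z: "lc_tvs TYPE('z)" and "open V"
  shows "open (\<Union>x\<in>S. \<Union>v\<in>V. {x + v})"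
proof -
  have "(\<Union>x\<in>S. \<Union>v\<in>V. {x + v}) = (\<Union>x\<in>S. (\<lambda>w. 1 *\<^sub>R w + (- x)) -` V)"
    by (auto simp: algebra_simps) (metis add.commute diff_add_cancel)
  then show ?thesis
    using \<open>open V\<close> by (simp only:) (intro open_UN ballI open_vimage_continuous_on_UNIV
        lc_tvs_continuous_on_affine[OF Z])
qed

lemma lc_tvs_separation_open:
  fixes W :: "'z::{real_vector,t2_space} set"
  assumes "lc_convex_open_nhd W" and "y \<notin> W"
  shows "\<exists>L::'z \<Rightarrow> real. linear L \<and> continuous_on UNIV L \<and> (\<forall>w\<in>W. L w < L y)"
proof -
  interpret W: lc_convex_open_nhd W by fact
  obtain L where L: "linear L" "L \<le> minkowski W" "L y = minkowski W y"
    using sublinear_linear_minorant_at[OF W.sublinear_minkowski] by blast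
  have L_less_1: "L w < 1" if "w \<in> W" for w
    using le_funD[OF L(2), of w] W.minkowski_less_1[OF that] by linarith
  then have "continuous_on UNIV L"
    using lc_tvs_continuous_on_linear[OF W.Z L(1) W.open_W W.zero_W] by (simp add: less_imp_le)
  moreover have "1 \<le> L y" using L(3) W.minkowski_ge_1[OF \<open>y \<notin> W\<close>] by simp
  ultimately show ?thesis using L(1) L_less_1 by force
qed

lemma lc_tvs_separation:
  fixes A :: "'z::{real_vector,t2_space} set"
  assumes Z: "lc_tvs TYPE('z)" and "closed A" "convex A" "a0 \<in> A" "p \<notin> A"
  shows "\<exists>L::'z \<Rightarrow> real. linear L \<and> continuous_on UNIV L \<and> (\<forall>a\<in>A. L a < L p)"
proof -
  have "open ((\<lambda>v. (- 1) *\<^sub>R v + p) -` (- A))"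
    using \<open>closed A\<close> by (intro open_vimage_continuous_on_UNIV[OF lc_tvs_continuous_on_affine[OF Z]]) auto
  moreover have "0 \<in> (\<lambda>v. (- 1) *\<^sub>R v + p) -` (- A)" using \<open>p \<notin> A\<close> by simp
  ultimately obtain V where V: "open V" "convex V" "0 \<in> V" "V \<subseteq> (\<lambda>v. (- 1) *\<^sub>R v + p) -` (- A)"
    using Z unfolding lc_tvs_def by blast
  define W where "W = (\<Union>x\<in>(+) (- a0) ` A. \<Union>v\<in>V. {x + v})"
  have "lc_convex_open_nhd W"
  proof
    show "open W" unfolding W_def by (rule lc_tvs_open_sums[OF Z V(1)])
    show "convex W" unfolding W_def by (intro convex_sums convex_translation \<open>convex A\<close> V(2))
    show "0 \<in> W" unfolding W_def using \<open>a0 \<in> A\<close> V(3) by force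
  qed (rule Z)
  moreover have "p - a0 \<notin> W" unfolding W_def using V(4) by (auto simp: algebra_simps)
  ultimately obtain L :: "'z \<Rightarrow> real" where L: "linear L" "continuous_on UNIV L"
    "\<forall>w\<in>W. L w < L (p - a0)"
    using lc_tvs_separation_open by blast
  have "L a < L p" if "a \<in> A" for a
  proof -
    have "a - a0 \<in> W" unfolding W_def using that V(3) by force
    then show ?thesis using L(3) linear_diff[OF L(1)] by fastforce
  qed
  with L(1,2) show ?thesis by blast
qed

section \<open>Scalarization\<close>

lemma GG_D:
  fixes A :: "'z::{real_vector,t2_space} set"
  assumes Z: "lc_tvs TYPE('z)" and A: "A \<in> GG C"
  shows "closed A" "convex A" "msum A C \<subseteq> A"
proof -
  have A_eq: "A = closure (convex hull (msum A C))" using A unfolding GG_def by simp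
  show "closed A" by (subst A_eq) simp
  show "convex A" by (subst A_eq) (rule lc_tvs_convex_closure[OF Z convex_convex_hull])
  show "msum A C \<subseteq> A"
    by (subst (2) A_eq) (meson closure_subset hull_subset order_trans)
qed

lemma phi_empty: "phi zs {} = \<infinity>"
  by (simp add: phi_def top_ereal_def)

lemma eminus_PInf_right: "eminus r \<infinity> = -\<infinity>"
proof -
  have "{t. r \<le> infadd \<infinity> (ereal t)} = UNIV" by (simp add: infadd_def)
  then show ?thesis
    unfolding eminus_def by (simp add: ereal_bot Inf_lower)
qed

lemma eminus_le: "r \<le> infadd s (ereal t) \<Longrightarrow> eminus r s \<le> ereal t"
  unfolding eminus_def by (auto intro: Inf_lower)

lemma phidir_empty: "f x = {} \<Longrightarrow> phidir f zs x u = -\<infinity>"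
proof -
  assume "f x = {}"
  then have "phidir f zs x u \<le> ereal (1 / 1) * eminus (phi zs (f (x + 1 *\<^sub>R u))) (phi zs (f x))"
    unfolding phidir_def by (intro INF_lower) simp
  also have "\<dots> = -\<infinity>" using \<open>f x = {}\<close> by (simp add: phi_empty eminus_PInf_right)
  finally show ?thesis by simp
qed

lemma phi_neg_not_subset_recc:
  assumes zs: "linear zs" and fin: "phi zs A \<noteq> -\<infinity>" and neg: "phi zs D < 0"
  shows "\<not> D \<subseteq> recc A"
proof
  assume "D \<subseteq> recc A"
  obtain w where "w \<in> D" and "ereal (- zs w) < 0" using neg unfolding phi_def Inf_less_iff by blast
  then have w: "w \<in> recc A" "0 < zs w" using \<open>D \<subseteq> recc A\<close> by auto
  then obtain a where a: "a \<in> A" and shift: "msum A {w} \<subseteq> A" unfolding recc_def by (auto split: if_splits)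
  have in_A: "a + real n *\<^sub>R w \<in> A" for n
  proof (induction n)
    case (Suc n)
    then have "(a + real n *\<^sub>R w) + w \<in> A" using shift unfolding msum_def by blast
    then show ?case by (simp add: algebra_simps)
  qed (simp add: a)
  have le: "phi zs A \<le> ereal (- zs a - real n * zs w)" for n
    using Inf_lower[OF imageI[OF in_A[of n]], of "\<lambda>z. ereal (- zs z)"]
    unfolding phi_def by (simp add: linear_add[OF zs] linear_scale[OF zs])
  then obtain m where m: "phi zs A = ereal m"
    using fin le[of 0] by (cases "phi zs A") auto
  obtain n where "- zs a - m < real n * zs w" using reals_Archimedean3[OF w(2)] by blast
  then show False using le[of n] m by simp
qed

lemma phi_le_ominus:
  assumes L: "linear L" and m: "phi L A = ereal m" and y: "y \<in> ominus B A"
  shows "phi L B \<le> ereal (m - L y)"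
proof (rule ereal_le_epsilon2)
  fix e :: real assume "0 < e"
  then have "phi L A < ereal (m + e)" using m by simp
  then obtain b where b: "b \<in> A" "- L b < m + e"
    unfolding phi_def by (auto simp: Inf_less_iff)
  then have "b + y \<in> B" using y unfolding ominus_def msum_def by blast
  then have "phi L B \<le> ereal (- L (b + y))" unfolding phi_def by (auto intro: Inf_lower)
  also have "\<dots> \<le> ereal (m - L y) + ereal e" using b(2) linear_add[OF L] by simp
  finally show "phi L B \<le> ereal (m - L y) + ereal e" .
qed

text \<open>So only the reverse inequality of the strong regularity condition is a genuine assumption.\<close>
lemma phidir_le_phi_sdir:
  assumes L: "linear L" "continuous_on UNIV L" and m: "phi L (f x) = ereal m"
  shows "phidir f L x u \<le> phi L (sdir f x u)"
  unfolding phi_def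
proof (rule Inf_greatest, clarify)
  fix z assume z: "z \<in> sdir f x u"
  define R where "R = {r. phidir f L x u \<le> ereal (- r)}"
  define K where "K = L -` R"
  have "closed R \<and> convex R"
  proof (cases "phidir f L x u")
    case (real p)
    then have "R = {..- p}" unfolding R_def by auto
    then show ?thesis by simp
  qed (simp_all add: R_def)
  then have "closed K" "convex K"
    unfolding K_def using continuous_on_closed_vimage[OF closed_UNIV] L
    by (auto intro: convex_linear_vimage)
  moreover have "sscale (1 / t) (ominus (f (x + t *\<^sub>R u)) (f x)) \<subseteq> K" if "0 < t" for t
  proof
    fix w assume "w \<in> sscale (1 / t) (ominus (f (x + t *\<^sub>R u)) (f x))"
    then obtain y where w: "w = (1 / t) *\<^sub>R y" and y: "y \<in> ominus (f (x + t *\<^sub>R u)) (f x)"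
      unfolding sscale_def by blast
    have "eminus (phi L (f (x + t *\<^sub>R u))) (phi L (f x)) \<le> ereal (- L y)"
      using phi_le_ominus[OF L(1) m y] m by (intro eminus_le) (simp add: infadd_def)
    then have "ereal (1 / t) * eminus (phi L (f (x + t *\<^sub>R u))) (phi L (f x)) \<le> ereal (- L w)"
      using ereal_mult_left_mono[of _ _ "ereal (1 / t)"] \<open>0 < t\<close> w linear_scale[OF L(1)]
      by fastforce
    then show "w \<in> K"
      unfolding K_def R_def phidir_def using \<open>0 < t\<close> by (auto intro: INF_lower2)
  qed
  ultimately have "closure (convex hull (\<Union>t\<in>{t. 0 < t \<and> t < 1}.
      sscale (1 / t) (ominus (f (x + t *\<^sub>R u)) (f x)))) \<subseteq> K"
    by (intro closure_minimal hull_minimal) auto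
  moreover have "z \<in> closure (convex hull (\<Union>t\<in>{t. 0 < t \<and> t < 1}.
      sscale (1 / t) (ominus (f (x + t *\<^sub>R u)) (f x))))"
    using z unfolding sdir_def by auto
  ultimately show "phidir f L x u \<le> ereal (- L z)" unfolding K_def R_def by auto
qed

lemma negdual_separation:
  fixes A :: "'z::{real_vector,t2_space} set"
  assumes Z: "lc_tvs TYPE('z)" and "cone C" and A: "A \<in> GG C" and a: "a \<in> A" "a + z \<notin> A"
  shows "\<exists>L\<in>negdual C - {\<lambda>z. 0}. 0 < L z \<and> phi L A \<noteq> -\<infinity>"
proof -
  obtain L :: "'z \<Rightarrow> real" where L: "linear L" "continuous_on UNIV L" "\<forall>b\<in>A. L b < L (a + z)"
    using lc_tvs_separation[OF Z GG_D(1,2)[OF Z A] a] by blast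
  have "0 < L z" using L(3) a(1) linear_add[OF L(1)] by fastforce
  \<comment> \<open>A is invariant under C, so L is bounded above on the rays of C\<close>
  have "L c \<le> 0" if "c \<in> C" for c
  proof (rule ccontr)
    assume "\<not> L c \<le> 0"
    define s where "s = L z / L c + 1"
    have "0 \<le> s" using \<open>0 < L z\<close> \<open>\<not> L c \<le> 0\<close> unfolding s_def by simp
    then have "a + s *\<^sub>R c \<in> A"
      using \<open>cone C\<close> that a(1) GG_D(3)[OF Z A] unfolding cone_def msum_def by blast
    then have "s * L c < L z" using L(3) linear_add[OF L(1)] linear_scale[OF L(1)] by fastforce
    then show False using \<open>\<not> L c \<le> 0\<close> unfolding s_def by (simp add: field_simps)
  qed
  then have "L \<in> negdual C - {\<lambda>z. 0}"
    unfolding negdual_def topdual_def using L(1,2) \<open>0 < L z\<close> by auto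
  moreover have "ereal (- L (a + z)) \<le> phi L A"
    unfolding phi_def using L(3) by (auto intro!: Inf_greatest)
  ultimately show ?thesis using \<open>0 < L z\<close> by force
qed

lemma scalarized_of_not_subset_recc:
  fixes f :: "'x::real_vector \<Rightarrow> 'z::{real_vector,t2_space} set"
  assumes Z: "lc_tvs TYPE('z)" and "cone C" and Cneg: "negdual C - {\<lambda>z. 0} \<noteq> {}"
    and fcv: "setconvex C f" and not_sub: "\<not> sdir f x u \<subseteq> recc (f x)"
  shows "\<exists>zs\<in>negdual C - {\<lambda>z. 0}. phi zs (f x) \<noteq> -\<infinity> \<and> phidir f zs x u < 0"
proof (cases "f x = {}")
  case True
  then show ?thesis using Cneg by (auto simp: phi_empty phidir_empty)
next
  case False
  obtain z where z: "z \<in> sdir f x u" "z \<notin> recc (f x)" using not_sub by blast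
  then obtain a where a: "a \<in> f x" "a + z \<notin> f x"
    using False unfolding recc_def msum_def by auto
  obtain L where L: "L \<in> negdual C - {\<lambda>z. 0}" "0 < L z" "phi L (f x) \<noteq> -\<infinity>"
    using negdual_separation[OF Z \<open>cone C\<close> _ a] fcv unfolding setconvex_def by blast
  have "phi L (f x) \<le> ereal (- L a)" unfolding phi_def using a(1) by (auto intro: Inf_lower)
  with L(3) obtain m where "phi L (f x) = ereal m" by (cases "phi L (f x)") auto
  moreover have "linear L" "continuous_on UNIV L" using L(1) unfolding negdual_def topdual_def by auto
  ultimately have "phidir f L x u \<le> phi L (sdir f x u)" by (intro phidir_le_phi_sdir)
  also have "\<dots> \<le> ereal (- L z)" unfolding phi_def using z(1) by (auto intro: Inf_lower)
  also have "\<dots> < 0" using L(2) by simp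
  finally show ?thesis using L(1,3) by blast
qed

theorem mainTheorem13:
  fixes f :: "'x::real_vector \<Rightarrow> 'z::{real_vector,t2_space} set"
    and C :: "'z set" and x0 :: 'x
  assumes Z: "lc_tvs TYPE('z)"
    and Ccl: "closed C" and Ccv: "convex C" and Ccone: "cone C" and C0: "0 \<in> C"
    and Cneg: "negdual C - {\<lambda>z. 0} \<noteq> {}"
    and fcv: "setconvex C f"
    and x0: "x0 \<in> sdom f"
  shows "((\<forall>x. f x \<noteq> f x0 \<longrightarrow> \<not> (sdir f x (x0 - x) \<subseteq> recc (f x))) \<longrightarrow>
          (\<forall>x. f x \<noteq> f x0 \<longrightarrow> (\<exists>zs\<in>negdual C - {\<lambda>z. 0}.
               phi zs (f x) \<noteq> -\<infinity> \<and> phidir f zs x (x0 - x) < 0)))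
       \<and> ((\<forall>zs\<in>negdual C - {\<lambda>z. 0}. \<forall>x u. phi zs (sdir f x u) = phidir f zs x u) \<longrightarrow>
          ((\<forall>x. f x \<noteq> f x0 \<longrightarrow> \<not> (sdir f x (x0 - x) \<subseteq> recc (f x))) \<longleftrightarrow>
           (\<forall>x. f x \<noteq> f x0 \<longrightarrow> (\<exists>zs\<in>negdual C - {\<lambda>z. 0}.
               phi zs (f x) \<noteq> -\<infinity> \<and> phidir f zs x (x0 - x) < 0))))"
proof -
  have set_to_scalar: "\<exists>zs\<in>negdual C - {\<lambda>z. 0}. phi zs (f x) \<noteq> -\<infinity> \<and> phidir f zs x u < 0"
    if "\<not> sdir f x u \<subseteq> recc (f x)" for x u
    using scalarized_of_not_subset_recc[OF Z Ccone Cneg fcv that] .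
  have scalar_to_set: "\<not> sdir f x u \<subseteq> recc (f x)"
    if regular: "\<forall>zs\<in>negdual C - {\<lambda>z. 0}. \<forall>x u. phi zs (sdir f x u) = phidir f zs x u"
      and scalar: "\<exists>zs\<in>negdual C - {\<lambda>z. 0}. phi zs (f x) \<noteq> -\<infinity> \<and> phidir f zs x u < 0"
    for x u
  proof -
    obtain zs where zs: "zs \<in> negdual C - {\<lambda>z. 0}" "phi zs (f x) \<noteq> -\<infinity>" "phidir f zs x u < 0"
      using scalar by blast
    then have "linear zs" unfolding negdual_def topdual_def by blast
    with zs regular show ?thesis by (intro phi_neg_not_subset_recc) auto
  qed
  show ?thesis using set_to_scalar scalar_to_set by blast
qed

end
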